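(* Let $H=(V,F)$ with $V=\{1,\dots,n\}$ be a graph with at least one edge, $k$ an integer, and $\chi:V_0\to\{1,\dots,k\}$ a proper coloring of $H[V_0]$ for some $V_0\subseteq V$. Let $G$ be the graph obtained as follows: start with $G=H$; add vertices $a,a',b,b'$ and edges $\{a,a'\},\{b,b'\},\{a,b\}$; for each $j\in V_0$ with $\chi(j)\in\{2,\dots,k-1\}$ add vertices $j(1),j(2)$ and edges $\{j,j(1)\},\{j,j(2)\},\{j(1),j(2)\},\{a,j\},\{b,j\},\{a,j(2)\},\{b,j(1)\}$; for each $j\in V_0$ with $\chi(j)=1$ add a vertex $j(2)$ and edges $\{j,j(2)\},\{b,j\},\{a,j(2)\}$; for each $j\in V_0$ with $\chi(j)=k$ add a vertex $j(1)$ and edges $\{j,j(1)\},\{a,j\},\{b,j(1)\}$. Then $tw(G)\le tw(H)+2$ and $pw(G)\le pw(H)+4$.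
   Context: $tw$ and $pw$ denote treewidth and pathwidth. *)

theory Defs
  imports Main
begin

definition simple_graph :: "'a set \<Rightarrow> 'a set set \<Rightarrow> bool" where
  "simple_graph V E \<longleftrightarrow> finite V \<and> (\<forall>e\<in>E. \<exists>x y. e = {x, y} \<and> x \<noteq> y \<and> x \<in> V \<and> y \<in> V)"

definition connected_on :: "'a set \<Rightarrow> 'a set set \<Rightarrow> bool" where
  "connected_on S E \<longleftrightarrow>
     (\<forall>u\<in>S. \<forall>v\<in>S. (\<lambda>x y. {x, y} \<in> E \<and> x \<in> S \<and> y \<in> S)\<^sup>*\<^sup>* u v)"

definition is_tree :: "nat set \<Rightarrow> nat set set \<Rightarrow> bool" where
  "is_tree I T \<longleftrightarrow> finite I \<and> I \<noteq> {} \<and> simple_graph I T \<and> connected_on I T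
                    \<and> card T = card I - 1"

definition tree_decomposition ::
  "'a set \<Rightarrow> 'a set set \<Rightarrow> nat set \<Rightarrow> nat set set \<Rightarrow> (nat \<Rightarrow> 'a set) \<Rightarrow> bool" where
  "tree_decomposition V E I T bag \<longleftrightarrow>
     is_tree I T \<and>
     (\<forall>i\<in>I. bag i \<subseteq> V) \<and>
     (\<forall>v\<in>V. \<exists>i\<in>I. v \<in> bag i) \<and>
     (\<forall>e\<in>E. \<exists>i\<in>I. e \<subseteq> bag i) \<and>
     (\<forall>v\<in>V. connected_on {i\<in>I. v \<in> bag i} T)"

definition path_decomposition ::
  "'a set \<Rightarrow> 'a set set \<Rightarrow> nat \<Rightarrow> (nat \<Rightarrow> 'a set) \<Rightarrow> bool" where
  "path_decomposition V E m bag \<longleftrightarrow>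
     m \<ge> 1 \<and>
     (\<forall>i<m. bag i \<subseteq> V) \<and>
     (\<forall>v\<in>V. \<exists>i<m. v \<in> bag i) \<and>
     (\<forall>e\<in>E. \<exists>i<m. e \<subseteq> bag i) \<and>
     (\<forall>v i j l. i \<le> j \<longrightarrow> j \<le> l \<longrightarrow> l < m \<longrightarrow> v \<in> bag i \<longrightarrow> v \<in> bag l \<longrightarrow> v \<in> bag j)"

definition decomp_width :: "nat set \<Rightarrow> (nat \<Rightarrow> 'a set) \<Rightarrow> nat" where
  "decomp_width I bag = Max ((\<lambda>i. card (bag i)) ` I) - 1"

definition treewidth :: "'a set \<Rightarrow> 'a set set \<Rightarrow> nat" where
  "treewidth V E = (LEAST w. \<exists>I T bag. tree_decomposition V E I T bag \<and> decomp_width I bag = w)"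

definition pathwidth :: "'a set \<Rightarrow> 'a set set \<Rightarrow> nat" where
  "pathwidth V E = (LEAST w. \<exists>m bag. path_decomposition V E m bag \<and> decomp_width {0..<m} bag = w)"

datatype gvert = Old nat | VA | VA' | VB | VB' | J1 nat | J2 nat

definition G_vertices :: "nat set \<Rightarrow> nat set \<Rightarrow> (nat \<Rightarrow> nat) \<Rightarrow> nat \<Rightarrow> gvert set" where
  "G_vertices V V0 \<chi> k =
     Old ` V \<union> {VA, VA', VB, VB'}
     \<union> {J1 j | j. j \<in> V0 \<and> \<chi> j \<in> {2..k-1}} \<union> {J2 j | j. j \<in> V0 \<and> \<chi> j \<in> {2..k-1}}
     \<union> {J2 j | j. j \<in> V0 \<and> \<chi> j = 1}
     \<union> {J1 j | j. j \<in> V0 \<and> \<chi> j = k}"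

definition G_edges :: "nat set set \<Rightarrow> nat set \<Rightarrow> (nat \<Rightarrow> nat) \<Rightarrow> nat \<Rightarrow> gvert set set" where
  "G_edges F V0 \<chi> k =
     (\<lambda>e. Old ` e) ` F \<union> {{VA, VA'}, {VB, VB'}, {VA, VB}}
     \<union> (\<Union>j\<in>{j\<in>V0. \<chi> j \<in> {2..k-1}}.
          {{Old j, J1 j}, {Old j, J2 j}, {J1 j, J2 j}, {VA, Old j}, {VB, Old j}, {VA, J2 j}, {VB, J1 j}})
     \<union> (\<Union>j\<in>{j\<in>V0. \<chi> j = 1}. {{Old j, J2 j}, {VB, Old j}, {VA, J2 j}})
     \<union> (\<Union>j\<in>{j\<in>V0. \<chi> j = k}. {{Old j, J1 j}, {VA, Old j}, {VB, J1 j}})"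

end

theory Submission
  imports Defs
begin

(* Adding a and b to every bag of an optimal decomposition of H raises the width by 2 and puts
   every vertex j of H into a common bag with a and b.  Each remaining vertex (a', b' and the gadget
   vertices j(1), j(2)) is adjacent only to a, b, j and other vertices of its own gadget.  In a tree
   decomposition we therefore hang the leaf {a, b, a', b'} anywhere and, for j in V0, the path of
   leaves {a, b, j, j(2)}, {b, j, j(1), j(2)} off a bag containing j, a, b; these bags have size 4,
   which is at most tw(H) + 3 because H has an edge.  In a path decomposition we instead duplicate
   such a bag (always one of size at most pw(H) + 3) and add the at most two new vertices to the
   copy, which costs 2 more. *)

lemma connected_on_walk_mono:
  assumes "connected_on S E" "E \<subseteq> E'" "S \<subseteq> S'" "u \<in> S" "v \<in> S"
  shows "(\<lambda>x y. {x, y} \<in> E' \<and> x \<in> S' \<and> y \<in> S')\<^sup>*\<^sup>* u v"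
proof -
  have "(\<lambda>x y. {x, y} \<in> E \<and> x \<in> S \<and> y \<in> S)\<^sup>*\<^sup>* u v"
    using assms(1,4,5) by (simp add: connected_on_def)
  then show ?thesis
    by (rule rtranclp_mono[THEN predicate2D, rotated]) (use assms(2,3) in auto)
qed

lemma connected_on_mono:
  assumes "connected_on S E" "E \<subseteq> E'"
  shows "connected_on S E'"
  unfolding connected_on_def using connected_on_walk_mono[OF assms order_refl] by blast

lemma connected_on_insert:
  assumes con: "connected_on S E" and p: "p \<in> S" and px: "{p, x} \<in> E"
  shows "connected_on (insert x S) E"
proof -
  let ?R = "\<lambda>a b. {a, b} \<in> E \<and> a \<in> insert x S \<and> b \<in> insert x S"
  have "?R\<^sup>*\<^sup>* u p \<and> ?R\<^sup>*\<^sup>* p u" if u: "u \<in> insert x S" for u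
  proof (cases "u = x")
    case True
    have "?R x p" "?R p x" using p px by (auto simp: insert_commute)
    then show ?thesis using True by blast
  next
    case False
    with u have "u \<in> S" by simp
    then show ?thesis
      using connected_on_walk_mono[OF con order_refl subset_insertI] p by blast
  qed
  then show ?thesis
    unfolding connected_on_def by (meson rtranclp_trans)
qed

lemma is_tree_add_leaf:
  assumes tree: "is_tree I T" and x: "x \<notin> I" and p: "p \<in> I"
  shows "is_tree (insert x I) (insert {p, x} T)"
proof -
  have fin: "finite I" and sg: "simple_graph I T" and con: "connected_on I T"
    and card: "card T = card I - 1"
    using tree by (auto simp: is_tree_def)
  have "T \<subseteq> Pow I" using sg by (auto simp: simple_graph_def)
  then have "finite T" "{p, x} \<notin> T" using fin x by (auto intro: finite_subset)
  moreover have "card I > 0" using fin p by (auto simp: card_gt_0_iff)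
  ultimately have "card (insert {p, x} T) = card (insert x I) - 1"
    using card fin x by simp
  moreover have "simple_graph (insert x I) (insert {p, x} T)"
    using sg p x fin unfolding simple_graph_def by blast
  moreover have "connected_on (insert x I) (insert {p, x} T)"
    by (rule connected_on_insert[OF connected_on_mono[OF con] p]) auto
  ultimately show ?thesis using fin by (simp add: is_tree_def)
qed

section \<open>Tree and path decompositions\<close>

lemma tree_decomposition_add_leaf:
  assumes td: "tree_decomposition V E I T bag" and p: "p \<in> I"
    and B: "B \<inter> V \<subseteq> bag p" and E': "\<forall>e\<in>E'. e \<subseteq> B"
  obtains x T' where "x \<notin> I"
    and "tree_decomposition (V \<union> B) (E \<union> E') (insert x I) T' (bag(x := B))"
proof -
  have tree: "is_tree I T" and bags: "\<forall>i\<in>I. bag i \<subseteq> V"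
    and verts: "\<forall>v\<in>V. \<exists>i\<in>I. v \<in> bag i" and edges: "\<forall>e\<in>E. \<exists>i\<in>I. e \<subseteq> bag i"
    and con: "\<forall>v\<in>V. connected_on {i\<in>I. v \<in> bag i} T"
    using td by (auto simp: tree_decomposition_def)
  obtain x where x: "x \<notin> I"
    using tree infinite_UNIV_nat ex_new_if_finite by (auto simp: is_tree_def)
  have "connected_on {i\<in>insert x I. v \<in> (bag(x := B)) i} (insert {p, x} T)"
    if v: "v \<in> V \<union> B" for v
  proof (cases "v \<in> V")
    case True
    have con_v: "connected_on {i\<in>I. v \<in> bag i} (insert {p, x} T)"
      using con True by (blast intro: connected_on_mono)
    show ?thesis
    proof (cases "v \<in> B")
      case True
      with \<open>v \<in> V\<close> B p have "p \<in> {i\<in>I. v \<in> bag i}" by auto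
      moreover have "{i\<in>insert x I. v \<in> (bag(x := B)) i} = insert x {i\<in>I. v \<in> bag i}"
        using True x by auto
      ultimately show ?thesis using connected_on_insert[OF con_v] by simp
    next
      case False
      then have "{i\<in>insert x I. v \<in> (bag(x := B)) i} = {i\<in>I. v \<in> bag i}"
        using x by auto
      then show ?thesis using con_v by simp
    qed
  next
    case False
    with v bags have "{i\<in>insert x I. v \<in> (bag(x := B)) i} = {x}" using x by auto
    then show ?thesis by (simp add: connected_on_def)
  qed
  then have "tree_decomposition (V \<union> B) (E \<union> E') (insert x I) (insert {p, x} T) (bag(x := B))"
    using is_tree_add_leaf[OF tree x p] bags verts edges E' x
    unfolding tree_decomposition_def by (auto 0 3)
  with x show thesis by (rule that)
qed

lemma tree_decomposition_image:
  assumes td: "tree_decomposition V E I T bag" and inj: "inj_on f V"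
  shows "tree_decomposition (f ` V) ((`) f ` E) I T (\<lambda>i. f ` bag i)"
proof -
  have bags: "\<forall>i\<in>I. bag i \<subseteq> V" using td by (simp add: tree_decomposition_def)
  have "{i\<in>I. f v \<in> f ` bag i} = {i\<in>I. v \<in> bag i}" if "v \<in> V" for v
    using bags inj that by (auto dest: inj_onD)
  then show ?thesis
    using td bags unfolding tree_decomposition_def by (auto 0 4)
qed

lemma tree_decomposition_add_to_all_bags:
  assumes td: "tree_decomposition V E I T bag" and E': "\<forall>e\<in>E'. e \<subseteq> U"
  shows "tree_decomposition (V \<union> U) (E \<union> E') I T (\<lambda>i. bag i \<union> U)"
proof -
  have "is_tree I T" using td by (simp add: tree_decomposition_def)
  then have "I \<noteq> {}" "connected_on I T" by (auto simp: is_tree_def)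
  moreover have "{i\<in>I. v \<in> bag i \<union> U} = (if v \<in> U then I else {i\<in>I. v \<in> bag i})" for v
    by auto
  ultimately show ?thesis
    using td E' unfolding tree_decomposition_def by (auto 0 3)
qed

lemma path_decompositionI:
  assumes "1 \<le> m" "\<And>i. i < m \<Longrightarrow> bag i \<subseteq> V" "\<And>v. v \<in> V \<Longrightarrow> \<exists>i<m. v \<in> bag i"
    "\<And>e. e \<in> E \<Longrightarrow> \<exists>i<m. e \<subseteq> bag i"
    "\<And>v i j l. i \<le> j \<Longrightarrow> j \<le> l \<Longrightarrow> l < m \<Longrightarrow> v \<in> bag i \<Longrightarrow> v \<in> bag l \<Longrightarrow> v \<in> bag j"
  shows "path_decomposition V E m bag"
  unfolding path_decomposition_def using assms by simp

lemma path_decompositionD: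
  assumes "path_decomposition V E m bag"
  shows "0 < m" "i < m \<Longrightarrow> bag i \<subseteq> V" "v \<in> V \<Longrightarrow> \<exists>i<m. v \<in> bag i"
    "e \<in> E \<Longrightarrow> \<exists>i<m. e \<subseteq> bag i"
    "i \<le> j \<Longrightarrow> j \<le> l \<Longrightarrow> l < m \<Longrightarrow> v \<in> bag i \<Longrightarrow> v \<in> bag l \<Longrightarrow> v \<in> bag j"
  using assms unfolding path_decomposition_def by auto

lemma path_decomposition_image:
  assumes pd: "path_decomposition V E m bag" and inj: "inj_on f V"
  shows "path_decomposition (f ` V) ((`) f ` E) m (\<lambda>i. f ` bag i)"
proof (rule path_decompositionI)
  note pdD = path_decompositionD[OF pd]
  show "1 \<le> m" using pdD(1) by simp
  show "f ` bag i \<subseteq> f ` V" if "i < m" for i using pdD(2)[OF that] by (rule image_mono)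
  show "\<exists>i<m. v \<in> f ` bag i" if "v \<in> f ` V" for v
  proof -
    obtain u where "u \<in> V" "v = f u" using \<open>v \<in> f ` V\<close> by blast
    then show ?thesis using pdD(3)[of u] by auto
  qed
  show "\<exists>i<m. e \<subseteq> f ` bag i" if "e \<in> (`) f ` E" for e
  proof -
    obtain e' where "e' \<in> E" "e = f ` e'" using \<open>e \<in> (`) f ` E\<close> by blast
    then show ?thesis using pdD(4)[of e'] by auto
  qed
  show "v \<in> f ` bag j"
    if ij: "i \<le> j" "j \<le> l" "l < m" and vi: "v \<in> f ` bag i" and vl: "v \<in> f ` bag l" for v i j l
  proof -
    obtain u where u: "u \<in> bag i" "v = f u" using vi by blast
    have "i < m" using ij by simp
    then have "u \<in> V" "bag l \<subseteq> V" using pdD(2) ij(3) u(1) by auto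
    then have "u \<in> bag l" using vl u(2) inj_on_image_mem_iff[OF inj] by simp
    with pdD(5)[OF ij u(1)] u(2) show ?thesis by blast
  qed
qed

lemma path_decomposition_add_to_all_bags:
  assumes pd: "path_decomposition V E m bag" and E': "\<forall>e\<in>E'. e \<subseteq> U"
  shows "path_decomposition (V \<union> U) (E \<union> E') m (\<lambda>i. bag i \<union> U)"
proof (rule path_decompositionI)
  note pdD = path_decompositionD[OF pd]
  show "1 \<le> m" using pdD(1) by simp
  show "bag i \<union> U \<subseteq> V \<union> U" if "i < m" for i using pdD(2)[OF that] by blast
  show "\<exists>i<m. v \<in> bag i \<union> U" if "v \<in> V \<union> U" for v
    using that pdD(1) pdD(3)[of v] by auto
  show "\<exists>i<m. e \<subseteq> bag i \<union> U" if "e \<in> E \<union> E'" for e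
    using that pdD(1) pdD(4)[of e] E' by auto
  show "v \<in> bag j \<union> U"
    if "i \<le> j" "j \<le> l" "l < m" "v \<in> bag i \<union> U" "v \<in> bag l \<union> U" for v i j l
    using that pdD(5)[of i j l v] by auto
qed

definition insert_bag_after :: "nat \<Rightarrow> 'a set \<Rightarrow> (nat \<Rightarrow> 'a set) \<Rightarrow> nat \<Rightarrow> 'a set" where
  "insert_bag_after q B bag i = (if i \<le> q then bag i else if i = Suc q then B else bag (i - 1))"

lemma insert_bag_after_keeps_bags:
  "i < m \<Longrightarrow> \<exists>i'<Suc m. insert_bag_after q B bag i' = bag i"
  by (rule exI[of _ "if i \<le> q then i else Suc i"]) (simp add: insert_bag_after_def)

lemma insert_bag_after_all:
  assumes "\<forall>i<m. P (bag i)" "P B" "q < m" "i < Suc m"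
  shows "P (insert_bag_after q B bag i)"
  using assms by (auto simp: insert_bag_after_def)

lemma path_decomposition_insert_bag_after:
  assumes pd: "path_decomposition V E m bag" and q: "q < m" and N: "N \<inter> V = {}"
    and E': "\<forall>e\<in>E'. e \<subseteq> bag q \<union> N"
  shows "path_decomposition (V \<union> N) (E \<union> E') (Suc m) (insert_bag_after q (bag q \<union> N) bag)"
    (is "path_decomposition _ _ _ ?bag")
proof (rule path_decompositionI)
  note pdD = path_decompositionD[OF pd]
  define f where "f i = (if i \<le> q then i else i - 1)" for i
  have f_mono: "i \<le> j \<Longrightarrow> f i \<le> f j" for i j by (auto simp: f_def)
  have f_less: "i < Suc m \<Longrightarrow> f i < m" for i using q by (auto simp: f_def)
  have bag_f: "?bag i = bag (f i) \<union> (if i = Suc q then N else {})" for i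
    by (simp add: insert_bag_after_def f_def)
  have new_bag: "?bag (Suc q) = bag q \<union> N" "Suc q < Suc m"
    using q by (auto simp: insert_bag_after_def)
  show "1 \<le> Suc m" by simp
  show "?bag i \<subseteq> V \<union> N" if "i < Suc m" for i
    using pdD(2)[OF f_less[OF that]] unfolding bag_f by auto
  show "\<exists>i<Suc m. v \<in> ?bag i" if "v \<in> V \<union> N" for v
    using that pdD(3)[of v] insert_bag_after_keeps_bags new_bag by (metis UnCI UnE)
  show "\<exists>i<Suc m. e \<subseteq> ?bag i" if "e \<in> E \<union> E'" for e
    using that pdD(4)[of e] insert_bag_after_keeps_bags new_bag E' by (metis UnE)
  show "v \<in> ?bag j"
    if ij: "i \<le> j" and jl: "j \<le> l" and l: "l < Suc m" and vi: "v \<in> ?bag i" and vl: "v \<in> ?bag l"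
    for v i j l
  proof (cases "v \<in> N")
    case True
    have "v \<notin> bag (f a)" if "a < Suc m" for a using pdD(2)[OF f_less[OF that]] N True by blast
    then have "i = Suc q" "l = Suc q"
      using vi vl ij jl l unfolding bag_f by (auto split: if_splits)
    with ij jl vi show ?thesis by (metis le_antisym)
  next
    case False
    with vi vl have "v \<in> bag (f i)" "v \<in> bag (f l)" unfolding bag_f by (auto split: if_splits)
    with pdD(5)[OF f_mono[OF ij] f_mono[OF jl] f_less[OF l]] show ?thesis
      unfolding bag_f by blast
  qed
qed

section \<open>Widths\<close>

lemma card_bag_le_decomp_width:
  assumes "finite I" "i \<in> I"
  shows "card (bag i) \<le> decomp_width I bag + 1"
proof -
  have "card (bag i) \<le> Max ((\<lambda>i. card (bag i)) ` I)" using assms by simp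
  then show ?thesis unfolding decomp_width_def by arith
qed

lemma decomp_width_le:
  assumes "finite I" "I \<noteq> {}" "\<And>i. i \<in> I \<Longrightarrow> card (bag i) \<le> c + 1"
  shows "decomp_width I bag \<le> c"
proof -
  have "Max ((\<lambda>i. card (bag i)) ` I) \<le> c + 1" using assms by simp
  then show ?thesis unfolding decomp_width_def by arith
qed

lemma decomp_width_ge_1:
  assumes "finite I" "i \<in> I" "finite (bag i)" "{x, y} \<subseteq> bag i" "x \<noteq> y"
  shows "1 \<le> decomp_width I bag"
proof -
  have "2 \<le> card (bag i)"
    using card_mono[OF assms(3,4)] assms(5) by simp
  then show ?thesis using card_bag_le_decomp_width[OF assms(1,2), of bag] by simp
qed

lemma treewidth_attained:
  assumes "simple_graph V E"
  shows "\<exists>I T bag. tree_decomposition V E I T bag \<and> decomp_width I bag = treewidth V E"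
proof -
  have "tree_decomposition V E {0} {} (\<lambda>_. V)"
    using assms unfolding tree_decomposition_def is_tree_def simple_graph_def connected_on_def
    by auto
  then have "\<exists>w I T bag. tree_decomposition V E I T bag \<and> decomp_width I bag = w" by blast
  then show ?thesis unfolding treewidth_def by (rule LeastI_ex)
qed

lemma treewidth_le: "tree_decomposition V E I T bag \<Longrightarrow> treewidth V E \<le> decomp_width I bag"
  unfolding treewidth_def by (rule Least_le) blast

lemma pathwidth_attained:
  assumes "simple_graph V E"
  shows "\<exists>m bag. path_decomposition V E m bag \<and> decomp_width {0..<m} bag = pathwidth V E"
proof -
  have "path_decomposition V E 1 (\<lambda>_. V)"
    using assms unfolding path_decomposition_def simple_graph_def by auto
  then have "\<exists>w m bag. path_decomposition V E m bag \<and> decomp_width {0..<m} bag = w" by blast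
  then show ?thesis unfolding pathwidth_def by (rule LeastI_ex)
qed

lemma pathwidth_le: "path_decomposition V E m bag \<Longrightarrow> pathwidth V E \<le> decomp_width {0..<m} bag"
  unfolding pathwidth_def by (rule Least_le) blast

lemma treewidth_ge_1:
  assumes sg: "simple_graph V E" and "E \<noteq> {}"
  shows "1 \<le> treewidth V E"
proof -
  obtain I T bag where td: "tree_decomposition V E I T bag"
    and width: "decomp_width I bag = treewidth V E"
    using treewidth_attained[OF sg] by blast
  obtain e where "e \<in> E" using \<open>E \<noteq> {}\<close> by blast
  then obtain x y where xy: "e = {x, y}" "x \<noteq> y" using sg unfolding simple_graph_def by blast
  obtain i where i: "i \<in> I" "e \<subseteq> bag i"
    using td \<open>e \<in> E\<close> unfolding tree_decomposition_def by blast
  have fin: "finite I" "finite V" "bag i \<subseteq> V"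
    using td sg i(1) by (auto simp: tree_decomposition_def is_tree_def simple_graph_def)
  have "1 \<le> decomp_width I bag"
    using i(2) xy by (intro decomp_width_ge_1[of I i bag x y, OF fin(1) i(1) finite_subset[OF fin(3,2)]])
      auto
  with width show ?thesis by simp
qed

lemma treewidth_le_card_bags:
  assumes td: "tree_decomposition V E I T bag" and "\<forall>i\<in>I. card (bag i) \<le> c + 1"
  shows "treewidth V E \<le> c"
proof -
  have "finite I" "I \<noteq> {}" using td by (auto simp: tree_decomposition_def is_tree_def)
  then have "decomp_width I bag \<le> c" using assms(2) by (intro decomp_width_le) auto
  with treewidth_le[OF td] show ?thesis by (rule order_trans)
qed

lemma pathwidth_le_card_bags:
  assumes pd: "path_decomposition V E m bag" and "\<forall>i<m. card (bag i) \<le> c + 1"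
  shows "pathwidth V E \<le> c"
proof -
  have "{0..<m} \<noteq> {}" using path_decompositionD(1)[OF pd] by simp
  then have "decomp_width {0..<m} bag \<le> c" using assms(2) by (intro decomp_width_le) auto
  with pathwidth_le[OF pd] show ?thesis by (rule order_trans)
qed

section \<open>Decompositions with anchored sets\<close>

definition anchored_tree_decomposition :: "'a set set \<Rightarrow> 'a set \<Rightarrow> 'a set set \<Rightarrow> nat \<Rightarrow> bool" where
  "anchored_tree_decomposition A V E C \<longleftrightarrow>
     (\<exists>I T bag. tree_decomposition V E I T bag \<and> (\<forall>i\<in>I. card (bag i) \<le> C)
        \<and> (\<forall>X\<in>A. \<exists>i\<in>I. X \<subseteq> bag i))"

lemma anchored_tree_decompositionI:
  "tree_decomposition V E I T bag \<Longrightarrow> \<forall>i\<in>I. card (bag i) \<le> C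
    \<Longrightarrow> (\<And>X. X \<in> A \<Longrightarrow> \<exists>i\<in>I. X \<subseteq> bag i) \<Longrightarrow> anchored_tree_decomposition A V E C"
  unfolding anchored_tree_decomposition_def by blast

lemma anchored_tree_decomposition_mono:
  "anchored_tree_decomposition A V E C \<Longrightarrow> A' \<subseteq> A \<Longrightarrow> anchored_tree_decomposition A' V E C"
  unfolding anchored_tree_decomposition_def subset_iff by metis

lemma anchored_tree_decomposition_add_leaf:
  assumes anch: "anchored_tree_decomposition A V E C" and X: "X \<in> A" and B: "B \<inter> V \<subseteq> X"
    and card: "card B \<le> C" and E': "\<forall>e\<in>E'. e \<subseteq> B"
  shows "anchored_tree_decomposition (insert B A) (V \<union> B) (E \<union> E') C"
proof -
  obtain I T bag where td: "tree_decomposition V E I T bag" and bags: "\<forall>i\<in>I. card (bag i) \<le> C"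
    and anchors: "\<forall>X\<in>A. \<exists>i\<in>I. X \<subseteq> bag i"
    using anch unfolding anchored_tree_decomposition_def by blast
  obtain p where p: "p \<in> I" "X \<subseteq> bag p" using anchors X by blast
  have "B \<inter> V \<subseteq> bag p" using B p(2) by blast
  then obtain x T' where x: "x \<notin> I"
    and td': "tree_decomposition (V \<union> B) (E \<union> E') (insert x I) T' (bag(x := B))"
    by (rule tree_decomposition_add_leaf[OF td p(1) _ E'])
  have "\<exists>i\<in>insert x I. Y \<subseteq> (bag(x := B)) i" if Y: "Y \<in> insert B A" for Y
  proof (cases "Y = B")
    case False
    with Y obtain i where "i \<in> I" "Y \<subseteq> bag i" using anchors by blast
    then show ?thesis using x by (intro bexI[of _ i]) auto
  next
    case True
    then show ?thesis by (intro bexI[of _ x]) auto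
  qed
  moreover have "\<forall>i\<in>insert x I. card ((bag(x := B)) i) \<le> C" using bags card by simp
  ultimately show ?thesis by (intro anchored_tree_decompositionI[OF td'])
qed

(* Only bags of size at most C are ever duplicated, and a copy receives at most two new vertices. *)
definition anchored_path_decomposition :: "'a set set \<Rightarrow> 'a set \<Rightarrow> 'a set set \<Rightarrow> nat \<Rightarrow> bool" where
  "anchored_path_decomposition A V E C \<longleftrightarrow>
     (\<exists>m bag. path_decomposition V E m bag \<and> (\<forall>i<m. card (bag i) \<le> C + 2)
        \<and> (\<forall>X\<in>A. \<exists>i<m. X \<subseteq> bag i \<and> card (bag i) \<le> C))"

lemma anchored_path_decompositionI:
  "path_decomposition V E m bag \<Longrightarrow> \<forall>i<m. card (bag i) \<le> C + 2
    \<Longrightarrow> (\<And>X. X \<in> A \<Longrightarrow> \<exists>i<m. X \<subseteq> bag i \<and> card (bag i) \<le> C)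
    \<Longrightarrow> anchored_path_decomposition A V E C"
  unfolding anchored_path_decomposition_def by blast

lemma anchored_path_decomposition_extend:
  assumes anch: "anchored_path_decomposition A V E C" and X: "X \<in> A" and N: "N \<inter> V = {}"
    and card: "card N \<le> 2" and E': "\<forall>e\<in>E'. e \<subseteq> X \<union> N"
  shows "anchored_path_decomposition A (V \<union> N) (E \<union> E') C"
proof -
  obtain m bag where pd: "path_decomposition V E m bag" and bags: "\<forall>i<m. card (bag i) \<le> C + 2"
    and anchors: "\<forall>X\<in>A. \<exists>i<m. X \<subseteq> bag i \<and> card (bag i) \<le> C"
    using anch unfolding anchored_path_decomposition_def by blast
  obtain q where q: "q < m" "X \<subseteq> bag q" "card (bag q) \<le> C" using anchors X by blast
  let ?bag = "insert_bag_after q (bag q \<union> N) bag"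
  have "\<forall>e\<in>E'. e \<subseteq> bag q \<union> N" using E' q(2) by blast
  then have "path_decomposition (V \<union> N) (E \<union> E') (Suc m) ?bag"
    by (rule path_decomposition_insert_bag_after[OF pd q(1) N])
  moreover have "\<forall>i<Suc m. card (?bag i) \<le> C + 2"
  proof -
    have "card (bag q \<union> N) \<le> C + 2" using card_Un_le[of "bag q" N] q(3) card by linarith
    then show ?thesis
      using insert_bag_after_all[of m "\<lambda>B. card B \<le> C + 2", OF bags _ q(1)] by blast
  qed
  moreover have "\<exists>i<Suc m. Y \<subseteq> ?bag i \<and> card (?bag i) \<le> C" if Y: "Y \<in> A" for Y
  proof -
    obtain i where i: "i < m" "Y \<subseteq> bag i" "card (bag i) \<le> C"
      using anchors Y by blast
    moreover obtain i' where "i' < Suc m" "?bag i' = bag i"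
      using insert_bag_after_keeps_bags[OF i(1), of q "bag q \<union> N"] by blast
    ultimately show ?thesis by (intro exI[of _ i']) simp
  qed
  ultimately show ?thesis
    unfolding anchored_path_decomposition_def by blast
qed

section \<open>The graph G\<close>

lemma card_le_4: "card {a, b, c, d} \<le> 4"
  using card_length[of "[a, b, c, d]"] by simp

lemma card_image_Un_le: "finite A \<Longrightarrow> card (f ` A \<union> U) \<le> card A + card U"
  by (meson add_right_mono card_Un_le card_image_le order_trans)

definition gadget_vertices :: "(nat \<Rightarrow> nat) \<Rightarrow> nat \<Rightarrow> nat \<Rightarrow> gvert set" where
  "gadget_vertices \<chi> k j =
     (if \<chi> j \<in> {2..k-1} \<or> \<chi> j = k then {J1 j} else {})
     \<union> (if \<chi> j \<in> {2..k-1} \<or> \<chi> j = 1 then {J2 j} else {})"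

definition gadget_edges :: "(nat \<Rightarrow> nat) \<Rightarrow> nat \<Rightarrow> nat \<Rightarrow> gvert set set" where
  "gadget_edges \<chi> k j =
     (if \<chi> j \<in> {2..k-1}
      then {{Old j, J1 j}, {Old j, J2 j}, {J1 j, J2 j}, {VA, Old j}, {VB, Old j}, {VA, J2 j}, {VB, J1 j}}
      else {})
     \<union> (if \<chi> j = 1 then {{Old j, J2 j}, {VB, Old j}, {VA, J2 j}} else {})
     \<union> (if \<chi> j = k then {{Old j, J1 j}, {VA, Old j}, {VB, J1 j}} else {})"

lemma G_vertices_empty: "G_vertices V {} \<chi> k = (Old ` V \<union> {VA, VB}) \<union> {VA', VB'}"
  unfolding G_vertices_def by auto

lemma G_edges_empty:
  "G_edges F {} \<chi> k = ((`) Old ` F \<union> {{VA, VB}}) \<union> {{VA, VA'}, {VB, VB'}}"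
  unfolding G_edges_def by auto

lemma G_vertices_insert:
  "G_vertices V (insert j S) \<chi> k = G_vertices V S \<chi> k \<union> gadget_vertices \<chi> k j"
  unfolding G_vertices_def gadget_vertices_def by auto

lemma G_edges_insert: "G_edges F (insert j S) \<chi> k = G_edges F S \<chi> k \<union> gadget_edges \<chi> k j"
proof -
  have "{i \<in> insert j S. P i} = (if P j then insert j {i \<in> S. P i} else {i \<in> S. P i})" for P
    by auto
  then show ?thesis unfolding G_edges_def gadget_edges_def by (simp add: Un_ac)
qed

lemma Old_VA_VB_in_G_vertices:
  "VA \<in> G_vertices V S \<chi> k" "VB \<in> G_vertices V S \<chi> k" "j \<in> V \<Longrightarrow> Old j \<in> G_vertices V S \<chi> k"
  unfolding G_vertices_def by auto

lemma gadget_vertices_fresh: "j \<notin> S \<Longrightarrow> gadget_vertices \<chi> k j \<inter> G_vertices V S \<chi> k = {}"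
  unfolding G_vertices_def gadget_vertices_def by auto

lemma gadget_vertices_subset: "gadget_vertices \<chi> k j \<subseteq> {J1 j, J2 j}"
  unfolding gadget_vertices_def by auto

lemma card_gadget_vertices: "card (gadget_vertices \<chi> k j) \<le> 2"
  unfolding gadget_vertices_def by (simp add: card_insert_if)

lemma gadget_edges_split:
  assumes "e \<in> gadget_edges \<chi> k j"
  shows "e \<subseteq> {VA, VB, Old j} \<union> (gadget_vertices \<chi> k j \<inter> {J2 j})
    \<or> e \<subseteq> {VB, Old j} \<union> gadget_vertices \<chi> k j"
  using assms unfolding gadget_edges_def gadget_vertices_def by (auto split: if_splits)

(* Once a and b are in every bag of a decomposition of H, each vertex j of H shares a bag with them;
   this is where the gadget of j is attached. *)
definition ab_anchors :: "nat set \<Rightarrow> gvert set set" where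
  "ab_anchors V = insert {VA, VB} ((\<lambda>v. {Old v, VA, VB}) ` V)"

lemma ab_anchors_in_bags:
  assumes "i0 \<in> I" "\<forall>v\<in>V. \<exists>i\<in>I. v \<in> bag i" "X \<in> ab_anchors V"
  shows "\<exists>i\<in>I. X \<subseteq> Old ` bag i \<union> {VA, VB}"
  using assms unfolding ab_anchors_def by blast

lemma anchored_tree_decomposition_G_empty:
  assumes td: "tree_decomposition V F I T bag" and fin: "finite V"
    and bags: "\<forall>i\<in>I. card (bag i) + 2 \<le> C" and C: "4 \<le> C"
  shows "anchored_tree_decomposition (ab_anchors V) (G_vertices V {} \<chi> k) (G_edges F {} \<chi> k) C"
proof -
  let ?bag = "\<lambda>i. Old ` bag i \<union> {VA, VB}"
  have "tree_decomposition (Old ` V \<union> {VA, VB}) ((`) Old ` F \<union> {{VA, VB}}) I T ?bag"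
    using tree_decomposition_add_to_all_bags[OF tree_decomposition_image[OF td],
        of Old "{{VA, VB}}" "{VA, VB}"]
    by (simp add: inj_on_def)
  moreover have "\<forall>i\<in>I. card (?bag i) \<le> C"
  proof
    fix i assume "i \<in> I"
    then have "finite (bag i)"
      using td fin by (auto simp: tree_decomposition_def intro: finite_subset)
    then have "card (?bag i) \<le> card (bag i) + 2"
      using card_image_Un_le[of "bag i" Old "{VA, VB}"] by simp
    then show "card (?bag i) \<le> C" using bags \<open>i \<in> I\<close> by fastforce
  qed
  moreover have "\<exists>i\<in>I. X \<subseteq> ?bag i" if X: "X \<in> ab_anchors V" for X
  proof -
    obtain i0 where "i0 \<in> I" using td by (auto simp: tree_decomposition_def is_tree_def)
    moreover have "\<forall>v\<in>V. \<exists>i\<in>I. v \<in> bag i" using td by (simp add: tree_decomposition_def)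
    ultimately show ?thesis using X by (rule ab_anchors_in_bags)
  qed
  ultimately have "anchored_tree_decomposition (ab_anchors V)
      (Old ` V \<union> {VA, VB}) ((`) Old ` F \<union> {{VA, VB}}) C"
    by (rule anchored_tree_decompositionI)
  then have "anchored_tree_decomposition (insert {VA, VB, VA', VB'} (ab_anchors V))
      ((Old ` V \<union> {VA, VB}) \<union> {VA, VB, VA', VB'}) (((`) Old ` F \<union> {{VA, VB}}) \<union> {{VA, VA'}, {VB, VB'}}) C"
    by (rule anchored_tree_decomposition_add_leaf[where X = "{VA, VB}"])
      (use C in \<open>auto simp: ab_anchors_def\<close>)
  then have "anchored_tree_decomposition (ab_anchors V)
      ((Old ` V \<union> {VA, VB}) \<union> {VA, VB, VA', VB'}) (((`) Old ` F \<union> {{VA, VB}}) \<union> {{VA, VA'}, {VB, VB'}}) C"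
    by (rule anchored_tree_decomposition_mono) (rule subset_insertI)
  moreover have "(Old ` V \<union> {VA, VB}) \<union> {VA, VB, VA', VB'} = G_vertices V {} \<chi> k"
    by (auto simp: G_vertices_empty)
  ultimately show ?thesis by (simp add: G_edges_empty)
qed

lemma anchored_tree_decomposition_G_insert:
  assumes anch: "anchored_tree_decomposition (ab_anchors V) (G_vertices V S \<chi> k) (G_edges F S \<chi> k) C"
    and j: "j \<in> V" "j \<notin> S" and C: "4 \<le> C"
  shows "anchored_tree_decomposition (ab_anchors V)
    (G_vertices V (insert j S) \<chi> k) (G_edges F (insert j S) \<chi> k) C"
proof -
  define W where "W = G_vertices V S \<chi> k"
  define N where "N = gadget_vertices \<chi> k j"
  define B1 where "B1 = {VA, VB, Old j} \<union> (N \<inter> {J2 j})"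
  define B2 where "B2 = {VB, Old j} \<union> N"
  define E1 where "E1 = {e \<in> gadget_edges \<chi> k j. e \<subseteq> B1}"
  define E2 where "E2 = {e \<in> gadget_edges \<chi> k j. e \<subseteq> B2}"
  have fresh: "N \<inter> W = {}" unfolding N_def W_def by (rule gadget_vertices_fresh[OF j(2)])
  have "card B1 \<le> card {VA, VB, Old j, J2 j}" by (rule card_mono) (auto simp: B1_def)
  then have "card B1 \<le> C" using card_le_4[of VA VB "Old j" "J2 j"] C by linarith
  moreover have "B1 \<inter> W \<subseteq> {Old j, VA, VB}" using fresh by (auto simp: B1_def)
  moreover have "{Old j, VA, VB} \<in> ab_anchors V" using j(1) by (simp add: ab_anchors_def)
  ultimately have anch1:
    "anchored_tree_decomposition (insert B1 (ab_anchors V)) (W \<union> B1) (G_edges F S \<chi> k \<union> E1) C"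
    using anchored_tree_decomposition_add_leaf[OF anch[folded W_def]] by (auto simp: E1_def)
  have "card B2 \<le> card {VB, Old j, J1 j, J2 j}"
    using gadget_vertices_subset[of \<chi> k j] by (intro card_mono) (auto simp: B2_def N_def)
  then have "card B2 \<le> C" using card_le_4[of VB "Old j" "J1 j" "J2 j"] C by linarith
  moreover have "B2 \<inter> (W \<union> B1) \<subseteq> B1" using fresh by (auto simp: B1_def B2_def)
  ultimately have "anchored_tree_decomposition (insert B2 (insert B1 (ab_anchors V))) (W \<union> B1 \<union> B2)
      (G_edges F S \<chi> k \<union> E1 \<union> E2) C"
    using anchored_tree_decomposition_add_leaf[OF anch1 insertI1] by (auto simp: E2_def)
  then have "anchored_tree_decomposition (ab_anchors V) (W \<union> B1 \<union> B2) (G_edges F S \<chi> k \<union> E1 \<union> E2) C"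
    by (rule anchored_tree_decomposition_mono) blast
  moreover have "W \<union> B1 \<union> B2 = G_vertices V (insert j S) \<chi> k"
    using Old_VA_VB_in_G_vertices[where V = V and S = S and \<chi> = \<chi> and k = k] j(1)
    unfolding G_vertices_insert W_def B1_def B2_def N_def by auto
  moreover have "G_edges F S \<chi> k \<union> E1 \<union> E2 = G_edges F (insert j S) \<chi> k"
    using gadget_edges_split[of _ \<chi> k j] unfolding G_edges_insert E1_def E2_def B1_def B2_def N_def
    by blast
  ultimately show ?thesis by simp
qed

lemma anchored_tree_decomposition_G:
  assumes td: "tree_decomposition V F I T bag" and fin: "finite V"
    and bags: "\<forall>i\<in>I. card (bag i) + 2 \<le> C" and C: "4 \<le> C" and S: "S \<subseteq> V"
  shows "anchored_tree_decomposition (ab_anchors V) (G_vertices V S \<chi> k) (G_edges F S \<chi> k) C"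
  using finite_subset[OF S fin] S
proof (induction S rule: finite_induct)
  case empty
  show ?case by (rule anchored_tree_decomposition_G_empty[OF td fin bags C])
next
  case (insert j S)
  then have "j \<in> V" "S \<subseteq> V" by auto
  show ?case
    using anchored_tree_decomposition_G_insert[OF insert.IH[OF \<open>S \<subseteq> V\<close>] \<open>j \<in> V\<close>] insert.hyps(2) C
    by blast
qed

lemma anchored_path_decomposition_G_empty:
  assumes pd: "path_decomposition V F m bag" and fin: "finite V"
    and bags: "\<forall>i<m. card (bag i) + 2 \<le> C"
  shows "anchored_path_decomposition (ab_anchors V) (G_vertices V {} \<chi> k) (G_edges F {} \<chi> k) C"
proof -
  let ?bag = "\<lambda>i. Old ` bag i \<union> {VA, VB}"
  have "path_decomposition (Old ` V \<union> {VA, VB}) ((`) Old ` F \<union> {{VA, VB}}) m ?bag"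
    using path_decomposition_add_to_all_bags[OF path_decomposition_image[OF pd],
        of Old "{{VA, VB}}" "{VA, VB}"]
    by (simp add: inj_on_def)
  moreover have small: "card (?bag i) \<le> C" if "i < m" for i
  proof -
    have "finite (bag i)" using path_decompositionD(2)[OF pd that] fin by (rule finite_subset)
    then have "card (?bag i) \<le> card (bag i) + 2"
      using card_image_Un_le[of "bag i" Old "{VA, VB}"] by simp
    then show ?thesis using bags that by fastforce
  qed
  then have "\<forall>i<m. card (?bag i) \<le> C + 2" by fastforce
  moreover have "\<exists>i<m. X \<subseteq> ?bag i \<and> card (?bag i) \<le> C" if X: "X \<in> ab_anchors V" for X
  proof -
    have "\<exists>i\<in>{..<m}. X \<subseteq> ?bag i"
      using path_decompositionD(1,3)[OF pd] by (intro ab_anchors_in_bags[OF _ _ X]) auto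
    then show ?thesis using small by auto
  qed
  ultimately have "anchored_path_decomposition (ab_anchors V)
      (Old ` V \<union> {VA, VB}) ((`) Old ` F \<union> {{VA, VB}}) C"
    by (rule anchored_path_decompositionI)
  then have "anchored_path_decomposition (ab_anchors V)
      ((Old ` V \<union> {VA, VB}) \<union> {VA', VB'}) (((`) Old ` F \<union> {{VA, VB}}) \<union> {{VA, VA'}, {VB, VB'}}) C"
    by (rule anchored_path_decomposition_extend[where X = "{VA, VB}"])
      (auto simp: ab_anchors_def card_insert_if)
  then show ?thesis by (simp add: G_vertices_empty G_edges_empty)
qed

lemma anchored_path_decomposition_G_insert:
  assumes anch: "anchored_path_decomposition (ab_anchors V) (G_vertices V S \<chi> k) (G_edges F S \<chi> k) C"
    and j: "j \<in> V" "j \<notin> S"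
  shows "anchored_path_decomposition (ab_anchors V)
    (G_vertices V (insert j S) \<chi> k) (G_edges F (insert j S) \<chi> k) C"
proof -
  have "\<forall>e\<in>gadget_edges \<chi> k j. e \<subseteq> {Old j, VA, VB} \<union> gadget_vertices \<chi> k j"
    using gadget_edges_split[of _ \<chi> k j] by blast
  moreover have "{Old j, VA, VB} \<in> ab_anchors V" using j(1) by (simp add: ab_anchors_def)
  ultimately have "anchored_path_decomposition (ab_anchors V)
      (G_vertices V S \<chi> k \<union> gadget_vertices \<chi> k j) (G_edges F S \<chi> k \<union> gadget_edges \<chi> k j) C"
    using anchored_path_decomposition_extend[OF anch _ gadget_vertices_fresh[OF j(2)]
        card_gadget_vertices] by simp
  then show ?thesis by (simp add: G_vertices_insert G_edges_insert)
qed

lemma anchored_path_decomposition_G: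
  assumes pd: "path_decomposition V F m bag" and fin: "finite V"
    and bags: "\<forall>i<m. card (bag i) + 2 \<le> C" and S: "S \<subseteq> V"
  shows "anchored_path_decomposition (ab_anchors V) (G_vertices V S \<chi> k) (G_edges F S \<chi> k) C"
  using finite_subset[OF S fin] S
proof (induction S rule: finite_induct)
  case empty
  show ?case by (rule anchored_path_decomposition_G_empty[OF pd fin bags])
next
  case (insert j S)
  then have "j \<in> V" "S \<subseteq> V" by auto
  show ?case
    using anchored_path_decomposition_G_insert[OF insert.IH[OF \<open>S \<subseteq> V\<close>] \<open>j \<in> V\<close>] insert.hyps(2)
    by blast
qed

lemma treewidth_G_le:
  assumes sg: "simple_graph V F" and F: "F \<noteq> {}" and V0: "V0 \<subseteq> V"
  shows "treewidth (G_vertices V V0 \<chi> k) (G_edges F V0 \<chi> k) \<le> treewidth V F + 2"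
proof -
  obtain I T bag where td: "tree_decomposition V F I T bag"
    and width: "decomp_width I bag = treewidth V F"
    using treewidth_attained[OF sg] by blast
  have fin: "finite V" "finite I"
    using sg td by (auto simp: simple_graph_def tree_decomposition_def is_tree_def)
  have "\<forall>i\<in>I. card (bag i) + 2 \<le> treewidth V F + 3"
    using card_bag_le_decomp_width[OF fin(2), where bag = bag] width by fastforce
  moreover have "4 \<le> treewidth V F + 3" using treewidth_ge_1[OF sg F] by simp
  ultimately have "anchored_tree_decomposition (ab_anchors V) (G_vertices V V0 \<chi> k) (G_edges F V0 \<chi> k)
      (treewidth V F + 3)"
    by (rule anchored_tree_decomposition_G[OF td fin(1) _ _ V0])
  then obtain I' T' bag'
    where td': "tree_decomposition (G_vertices V V0 \<chi> k) (G_edges F V0 \<chi> k) I' T' bag'"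
    and "\<forall>i\<in>I'. card (bag' i) \<le> treewidth V F + 3"
    unfolding anchored_tree_decomposition_def by blast
  then have "\<forall>i\<in>I'. card (bag' i) \<le> (treewidth V F + 2) + 1" by (simp add: numeral_eq_Suc)
  with td' show ?thesis by (rule treewidth_le_card_bags)
qed

lemma pathwidth_G_le:
  assumes sg: "simple_graph V F" and V0: "V0 \<subseteq> V"
  shows "pathwidth (G_vertices V V0 \<chi> k) (G_edges F V0 \<chi> k) \<le> pathwidth V F + 4"
proof -
  obtain m bag where pd: "path_decomposition V F m bag"
    and width: "decomp_width {0..<m} bag = pathwidth V F"
    using pathwidth_attained[OF sg] by blast
  have fin: "finite V" using sg by (simp add: simple_graph_def)
  have "\<forall>i<m. card (bag i) + 2 \<le> pathwidth V F + 3"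
    using card_bag_le_decomp_width[of "{0..<m}", where bag = bag] width by fastforce
  then have "anchored_path_decomposition (ab_anchors V) (G_vertices V V0 \<chi> k) (G_edges F V0 \<chi> k)
      (pathwidth V F + 3)"
    by (rule anchored_path_decomposition_G[OF pd fin _ V0])
  then obtain m' bag'
    where pd': "path_decomposition (G_vertices V V0 \<chi> k) (G_edges F V0 \<chi> k) m' bag'"
    and "\<forall>i<m'. card (bag' i) \<le> pathwidth V F + 3 + 2"
    unfolding anchored_path_decomposition_def by blast
  then have "\<forall>i<m'. card (bag' i) \<le> (pathwidth V F + 4) + 1" by (simp add: numeral_eq_Suc)
  with pd' show ?thesis by (rule pathwidth_le_card_bags)
qed

theorem lemma8:
  fixes n k :: nat and F :: "nat set set" and V0 :: "nat set" and \<chi> :: "nat \<Rightarrow> nat"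
  assumes "simple_graph {1..n} F"
    and "F \<noteq> {}"
    and "V0 \<subseteq> {1..n}"
    and "\<forall>j\<in>V0. \<chi> j \<in> {1..k}"
    and "\<forall>i\<in>V0. \<forall>j\<in>V0. {i, j} \<in> F \<longrightarrow> \<chi> i \<noteq> \<chi> j"
  shows "treewidth (G_vertices {1..n} V0 \<chi> k) (G_edges F V0 \<chi> k) \<le> treewidth {1..n} F + 2
       \<and> pathwidth (G_vertices {1..n} V0 \<chi> k) (G_edges F V0 \<chi> k) \<le> pathwidth {1..n} F + 4"
  using treewidth_G_le[OF assms(1-3)] pathwidth_G_le[OF assms(1,3)] by blast

end
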